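(* Let $G$ be a group with neutral element $e$ and let $S=\bigoplus_{g\in G}S_g$ be an epsilon-strongly $G$-graded ring. (a) If $S_e$ is block decomposable, then $S$ is epsilon-finitely $G$-graded. (b) If $S_e$ is left or right noetherian, then $S$ is epsilon-finitely $G$-graded. In particular, if $S_e$ is left or right noetherian and $N$ is any normal subgroup of $G$, then the induced $G/N$-grading of $S$ is epsilon-strong.
   Context: Rings are associative, not necessarily unital; $AB$ denotes finite sums of products. A $G$-grading ($S=\bigoplus_gS_g$, $S_gS_h\subseteq S_{gh}$) is epsilon-strong if $S_gS_{g^{-1}}S_g=S_g$ for all $g$ and each ring $S_gS_{g^{-1}}$ has a multiplicative identity element $\epsilon_g$ (then $S$ and $S_e$ are unital and the $\epsilon_g$ are central idempotents of $S_e$). It is epsilon-finite if it is epsilon-strong and $\bigvee\{\epsilon_g\mid g\in G\}$ (the set of finite joins, $a\vee b=a+b-ab$) is finite. A unital ring $R$ is block decomposable if $1=c_1+\cdots+c_r$ with each $c_i$ a central primitive idempotent. Induced grading: $S_C=\bigoplus_{g\in C}S_g$ for $C\in G/N$. *)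

theory Defs
  imports "HOL-Algebra.Coset"
begin

text \<open>The ring S is the whole (possibly non-unital) type 'a of class ring.
  AB = set of finite sums of products a*b with a in A, b in B.\<close>

definition setmul :: "'a::ring set \<Rightarrow> 'a set \<Rightarrow> 'a set" where
  "setmul A B = {x. \<exists>(n::nat) a b. (\<forall>i<n. a i \<in> A \<and> b i \<in> B) \<and> x = (\<Sum>i<n. a i * b i)}"

definition graded_ring :: "('g, 'm) monoid_scheme \<Rightarrow> ('g \<Rightarrow> 'a::ring set) \<Rightarrow> bool" where
  "graded_ring G S \<longleftrightarrow> group G
    \<and> (\<forall>g\<in>carrier G. 0 \<in> S g \<and> (\<forall>x\<in>S g. \<forall>y\<in>S g. x + y \<in> S g \<and> - x \<in> S g))
    \<and> (\<forall>g\<in>carrier G. \<forall>h\<in>carrier G. \<forall>x\<in>S g. \<forall>y\<in>S h. x * y \<in> S (g \<otimes>\<^bsub>G\<^esub> h))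
    \<and> (\<forall>x. \<exists>F f. finite F \<and> F \<subseteq> carrier G \<and> (\<forall>g\<in>F. f g \<in> S g) \<and> x = sum f F)
    \<and> (\<forall>F f. finite F \<and> F \<subseteq> carrier G \<and> (\<forall>g\<in>F. f g \<in> S g) \<and> sum f F = 0
              \<longrightarrow> (\<forall>g\<in>F. f g = 0))"

definition is_identity_of :: "'a::ring \<Rightarrow> 'a set \<Rightarrow> bool" where
  "is_identity_of u R \<longleftrightarrow> u \<in> R \<and> (\<forall>x\<in>R. u * x = x \<and> x * u = x)"

definition epsilon_strong :: "('g, 'm) monoid_scheme \<Rightarrow> ('g \<Rightarrow> 'a::ring set) \<Rightarrow> bool" where
  "epsilon_strong G S \<longleftrightarrow> graded_ring G S \<and>
     (\<forall>g\<in>carrier G.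
        setmul (setmul (S g) (S (inv\<^bsub>G\<^esub> g))) (S g) = S g
      \<and> (\<exists>u. is_identity_of u (setmul (S g) (S (inv\<^bsub>G\<^esub> g)))))"

definition eps :: "('g, 'm) monoid_scheme \<Rightarrow> ('g \<Rightarrow> 'a::ring set) \<Rightarrow> 'g \<Rightarrow> 'a" where
  "eps G S g = (THE u. is_identity_of u (setmul (S g) (S (inv\<^bsub>G\<^esub> g))))"

inductive_set join_closure :: "'a::ring set \<Rightarrow> 'a set" for X where
  base: "x \<in> X \<Longrightarrow> x \<in> join_closure X"
| join: "a \<in> join_closure X \<Longrightarrow> b \<in> join_closure X \<Longrightarrow> a + b - a * b \<in> join_closure X"

definition epsilon_finite :: "('g, 'm) monoid_scheme \<Rightarrow> ('g \<Rightarrow> 'a::ring set) \<Rightarrow> bool" where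
  "epsilon_finite G S \<longleftrightarrow> epsilon_strong G S \<and>
     finite (join_closure (eps G S ` carrier G))"

definition central_idempotent :: "'a::ring set \<Rightarrow> 'a \<Rightarrow> bool" where
  "central_idempotent R c \<longleftrightarrow> c \<in> R \<and> c * c = c \<and> (\<forall>x\<in>R. c * x = x * c)"

definition central_primitive_idempotent :: "'a::ring set \<Rightarrow> 'a \<Rightarrow> bool" where
  "central_primitive_idempotent R c \<longleftrightarrow> central_idempotent R c \<and> c \<noteq> 0 \<and>
     \<not> (\<exists>c1 c2. central_idempotent R c1 \<and> central_idempotent R c2 \<and> c1 \<noteq> 0 \<and> c2 \<noteq> 0
              \<and> c1 * c2 = 0 \<and> c2 * c1 = 0 \<and> c = c1 + c2)"

definition block_decomposable :: "'a::ring set \<Rightarrow> bool" where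
  "block_decomposable R \<longleftrightarrow> (\<exists>(r::nat) c. (\<forall>i<r. central_primitive_idempotent R (c i))
      \<and> is_identity_of (\<Sum>i<r. c i) R)"

definition left_ideal_of :: "'a::ring set \<Rightarrow> 'a set \<Rightarrow> bool" where
  "left_ideal_of R I \<longleftrightarrow> I \<subseteq> R \<and> 0 \<in> I \<and> (\<forall>x\<in>I. \<forall>y\<in>I. x + y \<in> I \<and> - x \<in> I)
     \<and> (\<forall>r\<in>R. \<forall>x\<in>I. r * x \<in> I)"

definition right_ideal_of :: "'a::ring set \<Rightarrow> 'a set \<Rightarrow> bool" where
  "right_ideal_of R I \<longleftrightarrow> I \<subseteq> R \<and> 0 \<in> I \<and> (\<forall>x\<in>I. \<forall>y\<in>I. x + y \<in> I \<and> - x \<in> I)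
     \<and> (\<forall>r\<in>R. \<forall>x\<in>I. x * r \<in> I)"

definition left_noetherian :: "'a::ring set \<Rightarrow> bool" where
  "left_noetherian R \<longleftrightarrow> (\<forall>I :: nat \<Rightarrow> 'a set. (\<forall>n. left_ideal_of R (I n)) \<and> (\<forall>n. I n \<subseteq> I (Suc n))
      \<longrightarrow> (\<exists>m. \<forall>n\<ge>m. I n = I m))"

definition right_noetherian :: "'a::ring set \<Rightarrow> bool" where
  "right_noetherian R \<longleftrightarrow> (\<forall>I :: nat \<Rightarrow> 'a set. (\<forall>n. right_ideal_of R (I n)) \<and> (\<forall>n. I n \<subseteq> I (Suc n))
      \<longrightarrow> (\<exists>m. \<forall>n\<ge>m. I n = I m))"

definition induced_grading :: "('g \<Rightarrow> 'a::ring set) \<Rightarrow> 'g set \<Rightarrow> 'a set" where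
  "induced_grading S C = {x. \<exists>F f. finite F \<and> F \<subseteq> C \<and> (\<forall>g\<in>F. f g \<in> S g) \<and> x = sum f F}"

end

theory Submission
  imports Defs
begin

text \<open>The \<open>\<epsilon>\<^sub>g\<close> are central idempotents of \<open>S\<^sub>e\<close>, and so are all their finite joins. If
  \<open>1 = c\<^sub>1 + \<dots> + c\<^sub>r\<close> with central primitive \<open>c\<^sub>i\<close>, then every central idempotent \<open>e\<close> has
  \<open>e c\<^sub>i \<in> {0, c\<^sub>i}\<close>, hence is the sum of a subset of the \<open>c\<^sub>i\<close>; so there are only finitely
  many central idempotents, which gives (a). A left or right noetherian \<open>S\<^sub>e\<close> is block
  decomposable: otherwise one could split off smaller and smaller central idempotents that are
  not sums of central primitive ones, and their complements would generate a strictly ascending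
  chain of ideals. For the induced grading, \<open>S\<^sub>C S\<^sub>C\<^sub>\<inverse> S\<^sub>C = S\<^sub>C\<close> follows coset-wise from
  \<open>S\<^sub>g S\<^sub>g\<^sub>\<inverse> S\<^sub>g = S\<^sub>g\<close>; and since the joins of the \<open>\<epsilon>\<^sub>g\<close>, \<open>g \<in> C\<close>, form a finite set, one of
  them dominates all \<open>\<epsilon>\<^sub>g\<close>, \<open>g \<in> C\<close>, and is the identity of \<open>S\<^sub>C S\<^sub>C\<^sub>\<inverse>\<close>.\<close>

section \<open>Products of additive subsets\<close>

lemma setmul_subset:
  assumes "0 \<in> T" and "\<And>x y. x \<in> T \<Longrightarrow> y \<in> T \<Longrightarrow> x + y \<in> T"
    and "\<And>a b. a \<in> A \<Longrightarrow> b \<in> B \<Longrightarrow> a * b \<in> T"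
  shows "setmul A B \<subseteq> T"
proof
  fix x assume "x \<in> setmul A B"
  then obtain n and a b :: "nat \<Rightarrow> 'a"
    where ab: "\<forall>i<n. a i \<in> A \<and> b i \<in> B" and x: "x = (\<Sum>i<n. a i * b i)"
    unfolding setmul_def by blast
  have "(\<Sum>i<m. a i * b i) \<in> T" if "m \<le> n" for m
    using that by (induction m) (simp_all add: assms ab)
  then show "x \<in> T" using x by simp
qed

lemma zero_in_setmul [simp]: "0 \<in> setmul A B"
  unfolding setmul_def by (auto intro: exI[of _ 0])

lemma setmul_add_mult:
  assumes "x \<in> setmul A B" "a \<in> A" "b \<in> B"
  shows "x + a * b \<in> setmul A B"
proof -
  obtain n and f g :: "nat \<Rightarrow> 'a"
    where fg: "\<forall>i<n. f i \<in> A \<and> g i \<in> B" and x: "x = (\<Sum>i<n. f i * g i)"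
    using assms(1) unfolding setmul_def by blast
  have "x + a * b = (\<Sum>i<Suc n. (f(n := a)) i * (g(n := b)) i)"
    using x by simp
  moreover have "\<forall>i<Suc n. (f(n := a)) i \<in> A \<and> (g(n := b)) i \<in> B"
    using fg assms by (auto simp: less_Suc_eq)
  ultimately show ?thesis unfolding setmul_def by blast
qed

lemma mult_in_setmul: "a \<in> A \<Longrightarrow> b \<in> B \<Longrightarrow> a * b \<in> setmul A B"
  using setmul_add_mult[OF zero_in_setmul] by fastforce

lemma setmul_add:
  assumes "x \<in> setmul A B" "y \<in> setmul A B"
  shows "x + y \<in> setmul A B"
proof -
  have "setmul A B \<subseteq> {y. \<forall>x\<in>setmul A B. x + y \<in> setmul A B}"
    by (rule setmul_subset) (auto simp: setmul_add_mult add.assoc[symmetric])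
  then show ?thesis using assms by blast
qed

lemma setmul_sum:
  "finite F \<Longrightarrow> (\<And>i. i \<in> F \<Longrightarrow> f i \<in> setmul A B) \<Longrightarrow> sum f F \<in> setmul A B"
  by (induction F rule: finite_induct) (auto intro: setmul_add)

lemma setmul_mono: "A \<subseteq> A' \<Longrightarrow> B \<subseteq> B' \<Longrightarrow> setmul A B \<subseteq> setmul A' B'"
  unfolding setmul_def by blast

lemma setmul_uminus:
  assumes "x \<in> setmul A B" and "\<And>a. a \<in> A \<Longrightarrow> - a \<in> A"
  shows "- x \<in> setmul A B"
proof -
  have "setmul A B \<subseteq> {x. - x \<in> setmul A B}"
    by (rule setmul_subset)
      (simp_all only: mem_Collect_eq minus_add_distrib minus_zero minus_mult_left zero_in_setmul
        setmul_add mult_in_setmul assms(2))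
  then show ?thesis using assms(1) by blast
qed

lemma setmul_mult_right:
  assumes "x \<in> setmul A B" and "\<And>b. b \<in> B \<Longrightarrow> b * r \<in> B"
  shows "x * r \<in> setmul A B"
proof -
  have "setmul A B \<subseteq> {x. x * r \<in> setmul A B}"
    by (rule setmul_subset) (auto simp: distrib_right mult.assoc setmul_add mult_in_setmul assms(2))
  then show ?thesis using assms(1) by blast
qed

lemma setmul_mult_left:
  assumes "x \<in> setmul A B" and "\<And>a. a \<in> A \<Longrightarrow> r * a \<in> A"
  shows "r * x \<in> setmul A B"
proof -
  have "setmul A B \<subseteq> {x. r * x \<in> setmul A B}"
    by (rule setmul_subset)
      (auto simp: distrib_left mult.assoc[symmetric] setmul_add mult_in_setmul assms(2))
  then show ?thesis using assms(1) by blast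
qed

lemma setmul_assoc_subset: "setmul (setmul A B) C \<subseteq> setmul A (setmul B C)"
proof (rule setmul_subset)
  fix y c assume y: "y \<in> setmul A B" and c: "c \<in> C"
  have "setmul A B \<subseteq> {y. y * c \<in> setmul A (setmul B C)}"
    by (rule setmul_subset) (auto simp: distrib_right mult.assoc setmul_add mult_in_setmul c)
  then show "y * c \<in> setmul A (setmul B C)"
    using y by blast
qed (auto intro: setmul_add)

lemma setmul_left_identity:
  assumes "x \<in> setmul A B" and "\<And>a. a \<in> A \<Longrightarrow> u * a = a"
  shows "u * x = x"
proof -
  have "setmul A B \<subseteq> {x. u * x = x}"
    by (rule setmul_subset) (auto simp: distrib_left assms(2) mult.assoc[symmetric])
  then show ?thesis using assms(1) by blast
qed

lemma setmul_right_identity: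
  assumes "x \<in> setmul A B" and "\<And>b. b \<in> B \<Longrightarrow> b * u = b"
  shows "x * u = x"
proof -
  have "setmul A B \<subseteq> {x. x * u = x}"
    by (rule setmul_subset) (auto simp: distrib_right assms(2) mult.assoc)
  then show ?thesis using assms(1) by blast
qed

lemma is_identity_of_setmul:
  assumes "u \<in> setmul A B" and "\<And>a. a \<in> A \<Longrightarrow> u * a = a" and "\<And>b. b \<in> B \<Longrightarrow> b * u = b"
  shows "is_identity_of u (setmul A B)"
  unfolding is_identity_of_def
  using assms setmul_left_identity setmul_right_identity by blast

lemma is_identity_of_unique: "is_identity_of u R \<Longrightarrow> is_identity_of v R \<Longrightarrow> u = v"
  unfolding is_identity_of_def by metis

section \<open>Central idempotents\<close>

lemma central_idempotent_commute: "central_idempotent R c \<Longrightarrow> x \<in> R \<Longrightarrow> c * x = x * c"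
  unfolding central_idempotent_def by blast

lemma central_idempotent_idem: "central_idempotent R c \<Longrightarrow> c * c = c"
  unfolding central_idempotent_def by blast

lemma central_idempotent_mem: "central_idempotent R c \<Longrightarrow> c \<in> R"
  unfolding central_idempotent_def by blast

definition block_sum :: "'a::ring set \<Rightarrow> 'a \<Rightarrow> bool" where
  "block_sum R f \<longleftrightarrow> (\<exists>cs. (\<forall>c\<in>set cs. central_primitive_idempotent R c) \<and> sum_list cs = f)"

lemma block_sum_zero: "block_sum R 0"
  unfolding block_sum_def by (rule exI[of _ "[]"]) simp

lemma block_sum_primitive: "central_primitive_idempotent R c \<Longrightarrow> block_sum R c"
  unfolding block_sum_def by (rule exI[of _ "[c]"]) simp

lemma block_sum_add:
  assumes "block_sum R a" and "block_sum R b"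
  shows "block_sum R (a + b)"
proof -
  obtain as bs where "\<forall>c\<in>set as. central_primitive_idempotent R c" "sum_list as = a"
    and "\<forall>c\<in>set bs. central_primitive_idempotent R c" "sum_list bs = b"
    using assms unfolding block_sum_def by blast
  then show ?thesis
    unfolding block_sum_def by (intro exI[of _ "as @ bs"]) auto
qed

lemma not_block_sum_split:
  assumes f: "central_idempotent R f" and "\<not> block_sum R f"
  obtains f' where "central_idempotent R f'" "\<not> block_sum R f'" "f * f' = f'" "f' \<noteq> f"
proof -
  have "f \<noteq> 0" and "\<not> central_primitive_idempotent R f"
    using \<open>\<not> block_sum R f\<close> block_sum_zero block_sum_primitive by blast+
  with f obtain c1 c2 where c: "central_idempotent R c1" "central_idempotent R c2" "c1 \<noteq> 0" "c2 \<noteq> 0"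
    "c1 * c2 = 0" "c2 * c1 = 0" "f = c1 + c2"
    unfolding central_primitive_idempotent_def by blast
  have "\<not> block_sum R c1 \<or> \<not> block_sum R c2"
    using \<open>\<not> block_sum R f\<close> \<open>f = c1 + c2\<close> block_sum_add by blast
  moreover have "f * c1 = c1" "f * c2 = c2"
    using c central_idempotent_idem by (simp_all add: distrib_right)
  moreover have "c1 \<noteq> f" "c2 \<noteq> f"
    using c by auto
  ultimately show thesis
    using that c(1,2) by blast
qed

lemma not_block_sum_descending_chain:
  assumes "central_idempotent R e" and "\<not> block_sum R e"
  obtains f where "\<And>n. central_idempotent R (f n)"
    and "\<And>n. f n * f (Suc n) = f (Suc n)" and "\<And>n. f (Suc n) \<noteq> f n"
proof -
  have "\<exists>f. \<forall>n. (central_idempotent R (f n) \<and> \<not> block_sum R (f n))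
      \<and> (f n * f (Suc n) = f (Suc n) \<and> f (Suc n) \<noteq> f n)"
  proof (rule dependent_nat_choice)
    show "\<exists>f. central_idempotent R f \<and> \<not> block_sum R f"
      using assms by blast
    show "\<exists>f'. (central_idempotent R f' \<and> \<not> block_sum R f') \<and> f * f' = f' \<and> f' \<noteq> f"
      if "central_idempotent R f \<and> \<not> block_sum R f" for f n
      using that not_block_sum_split by metis
  qed
  then show thesis
    using that by blast
qed

lemma join_closure_mono: "X \<subseteq> Y \<Longrightarrow> join_closure X \<subseteq> join_closure Y"
proof
  show "x \<in> join_closure Y" if "X \<subseteq> Y" and "x \<in> join_closure X" for x
    using that(2) by induction (use that(1) in \<open>auto intro: join_closure.intros\<close>)
qed

locale unital_subring =
  fixes R :: "'a::ring set" and u :: 'a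
  assumes identity: "is_identity_of u R"
    and zero_closed: "0 \<in> R"
    and add_closed: "x \<in> R \<Longrightarrow> y \<in> R \<Longrightarrow> x + y \<in> R"
    and uminus_closed: "x \<in> R \<Longrightarrow> - x \<in> R"
    and mult_closed: "x \<in> R \<Longrightarrow> y \<in> R \<Longrightarrow> x * y \<in> R"
begin

lemma diff_closed: "x \<in> R \<Longrightarrow> y \<in> R \<Longrightarrow> x - y \<in> R"
  unfolding diff_conv_add_uminus by (intro add_closed uminus_closed)

lemma identity_mem: "u \<in> R"
  and identity_left [simp]: "x \<in> R \<Longrightarrow> u * x = x"
  and identity_right [simp]: "x \<in> R \<Longrightarrow> x * u = x"
  using identity unfolding is_identity_of_def by blast+

lemma central_idempotent_mult:
  assumes a: "central_idempotent R a" and b: "central_idempotent R b"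
  shows "central_idempotent R (a * b)"
proof -
  have ba: "b * a = a * b"
    using central_idempotent_commute[OF b central_idempotent_mem[OF a]] .
  have "a * b * (a * b) = a * (b * a) * b"
    by (simp only: mult.assoc)
  also have "\<dots> = (a * a) * (b * b)"
    by (simp only: ba mult.assoc)
  also have "\<dots> = a * b"
    using a b by (simp add: central_idempotent_idem)
  finally have "a * b * (a * b) = a * b" .
  moreover have "a * b * x = x * (a * b)" if "x \<in> R" for x
    using central_idempotent_commute[OF a that] central_idempotent_commute[OF b that]
    by (metis mult.assoc)
  moreover have "a * b \<in> R"
    using a b by (simp add: central_idempotent_mem mult_closed)
  ultimately show ?thesis
    unfolding central_idempotent_def by blast
qed

lemma central_idempotent_complement:
  assumes e: "central_idempotent R e"
  shows "central_idempotent R (u - e)"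
proof -
  have e_R: "e \<in> R" and ee: "e * e = e"
    using e by (simp_all add: central_idempotent_mem central_idempotent_idem)
  have "(u - e) * (u - e) = u - e"
    using e_R ee identity_mem by (simp add: algebra_simps)
  moreover have "(u - e) * x = x * (u - e)" if "x \<in> R" for x
    using central_idempotent_commute[OF e that] that by (simp add: algebra_simps)
  ultimately show ?thesis
    unfolding central_idempotent_def using diff_closed[OF identity_mem e_R] by blast
qed

lemma central_idempotent_identity: "central_idempotent R u"
  unfolding central_idempotent_def using identity_mem by simp

lemma central_idempotent_join:
  assumes a: "central_idempotent R a" and b: "central_idempotent R b"
  shows "central_idempotent R (a + b - a * b)"
proof -
  have "a + b - a * b = u - (u - a) * (u - b)"
    using a b identity_mem by (simp add: algebra_simps central_idempotent_mem)
  then show ?thesis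
    using assms by (simp add: central_idempotent_complement central_idempotent_mult)
qed

lemma central_idempotent_times_primitive:
  assumes e: "central_idempotent R e" and c: "central_primitive_idempotent R c"
  shows "e * c = 0 \<or> e * c = c"
proof -
  let ?f = "e * c"
  have cI: "central_idempotent R c"
    using c unfolding central_primitive_idempotent_def by blast
  have fI: "central_idempotent R ?f"
    using e cI by (rule central_idempotent_mult)
  have "(u - e) * c = c - ?f"
    using cI by (simp add: algebra_simps central_idempotent_mem)
  then have cfI: "central_idempotent R (c - ?f)"
    using e cI by (metis central_idempotent_complement central_idempotent_mult)
  have fc: "?f * c = ?f" and cf: "c * ?f = ?f"
    using cI central_idempotent_commute[OF cI central_idempotent_mem[OF e]]
    by (simp_all add: mult.assoc central_idempotent_idem) (metis mult.assoc central_idempotent_idem)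
  have "?f * (c - ?f) = 0" "(c - ?f) * ?f = 0"
    using fc cf central_idempotent_idem[OF fI] by (simp_all add: algebra_simps)
  moreover have "c = ?f + (c - ?f)"
    by simp
  ultimately have "?f = 0 \<or> c - ?f = 0"
    using c fI cfI unfolding central_primitive_idempotent_def by blast
  then show ?thesis
    by auto
qed

lemma finite_central_idempotents:
  assumes "block_decomposable R"
  shows "finite {e. central_idempotent R e}"
proof -
  obtain r :: nat and c where c: "\<forall>i<r. central_primitive_idempotent R (c i)"
    and "is_identity_of (\<Sum>i<r. c i) R"
    using assms unfolding block_decomposable_def by blast
  then have u_sum: "u = (\<Sum>i<r. c i)"
    using identity is_identity_of_unique by blast
  have "e \<in> (\<lambda>A. \<Sum>i\<in>A. c i) ` Pow {..<r}" if e: "central_idempotent R e" for e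
  proof -
    have "e = (\<Sum>i<r. e * c i)"
      using e u_sum identity_right[of e] by (simp add: central_idempotent_mem sum_distrib_left)
    also have "\<dots> = (\<Sum>i\<in>{i\<in>{..<r}. e * c i = c i}. e * c i)"
      by (rule sum.mono_neutral_right) (use central_idempotent_times_primitive[OF e] c in auto)
    also have "\<dots> = (\<Sum>i\<in>{i\<in>{..<r}. e * c i = c i}. c i)"
      by simp
    finally show ?thesis
      by blast
  qed
  then show ?thesis
    by (blast intro: finite_subset)
qed

lemma join_closure_central_idempotent:
  assumes "x \<in> join_closure X" and "\<And>x. x \<in> X \<Longrightarrow> central_idempotent R x"
  shows "central_idempotent R x"
  using assms by (induction rule: join_closure.induct) (auto intro: central_idempotent_join)

lemma join_closure_upper_bound:
  assumes "finite X" and "X \<noteq> {}" and "\<And>x. x \<in> X \<Longrightarrow> central_idempotent R x"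
  shows "\<exists>w\<in>join_closure X. \<forall>v\<in>X. v * w = v"
  using assms
proof (induction X rule: finite_ne_induct)
  case (singleton a)
  then show ?case
    using join_closure.base central_idempotent_idem by blast
next
  case (insert a A)
  then obtain w where w: "w \<in> join_closure A" "\<forall>v\<in>A. v * w = v"
    by blast
  have "join_closure A \<subseteq> join_closure (insert a A)"
    by (rule join_closure_mono) blast
  with w(1) have "a + w - a * w \<in> join_closure (insert a A)"
    by (blast intro: join_closure.intros)
  moreover have aI: "central_idempotent R a" and wI: "central_idempotent R w"
    using insert.prems w(1) join_closure_central_idempotent[of w A] by auto
  have "a * (a + w - a * w) = a"
    using central_idempotent_idem[OF aI] by (simp add: algebra_simps mult.assoc[symmetric])
  moreover have "v * (a + w - a * w) = v" if "v \<in> A" for v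
  proof -
    have "v * (a * w) = v * w * a"
      using central_idempotent_commute[OF aI central_idempotent_mem[OF wI]] by (simp add: mult.assoc)
    then show ?thesis
      using w(2) that by (simp add: algebra_simps)
  qed
  ultimately show ?case
    by blast
qed

lemma principal_ideal_two_sided:
  assumes e: "central_idempotent R e"
  shows "left_ideal_of R ((\<lambda>x. x * e) ` R)" and "right_ideal_of R ((\<lambda>x. x * e) ` R)"
proof -
  let ?J = "(\<lambda>x. x * e) ` R"
  have e_R: "e \<in> R"
    using e by (rule central_idempotent_mem)
  have mem: "x * e \<in> ?J" if "x \<in> R" for x
    using that by blast
  have sub: "?J \<subseteq> R"
    using e_R by (auto intro: mult_closed)
  have zero: "0 \<in> ?J"
    using mem[OF zero_closed] by simp
  have add: "a + b \<in> ?J" if "a \<in> ?J" "b \<in> ?J" for a b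
    using that mem[OF add_closed] by (auto simp: distrib_right)
  have neg: "- a \<in> ?J" if "a \<in> ?J" for a
    using that mem[OF uminus_closed] by auto
  have mult: "r * a \<in> ?J" "a * r \<in> ?J" if r: "r \<in> R" and a: "a \<in> ?J" for r a
  proof -
    obtain x where "x \<in> R" "a = x * e"
      using a by blast
    moreover have "x * e * r = x * r * e"
      using central_idempotent_commute[OF e \<open>r \<in> R\<close>] by (simp add: mult.assoc)
    ultimately show "r * a \<in> ?J" "a * r \<in> ?J"
      using mem[OF mult_closed] \<open>r \<in> R\<close> by (simp_all add: mult.assoc[symmetric])
  qed
  show "left_ideal_of R ?J" "right_ideal_of R ?J"
    unfolding left_ideal_of_def right_ideal_of_def
    by (intro conjI ballI sub zero add neg mult; assumption)+
qed

lemma principal_ideal_mono: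
  assumes "e \<in> R" and "e * e' = e"
  shows "(\<lambda>x. x * e) ` R \<subseteq> (\<lambda>x. x * e') ` R"
proof
  fix a assume "a \<in> (\<lambda>x. x * e) ` R"
  then obtain x where "x \<in> R" "a = x * e"
    by blast
  then have "a = (x * e) * e'"
    using assms(2) by (simp add: mult.assoc)
  then show "a \<in> (\<lambda>x. x * e') ` R"
    using \<open>x \<in> R\<close> assms(1) mult_closed by blast
qed

lemma principal_ideal_inj:
  assumes e: "central_idempotent R e" and e': "central_idempotent R e'"
    and eq: "(\<lambda>x. x * e) ` R = (\<lambda>x. x * e') ` R"
  shows "e = e'"
proof -
  have absorb: "a * b = a"
    if a: "central_idempotent R a" and b: "central_idempotent R b"
      and "(\<lambda>x. x * a) ` R = (\<lambda>x. x * b) ` R" for a b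
  proof -
    have "a \<in> (\<lambda>x. x * b) ` R"
      using \<open>(\<lambda>x. x * a) ` R = _\<close> identity_mem identity_left[OF central_idempotent_mem[OF a]] by force
    then obtain x where "a = x * b"
      by blast
    then show ?thesis
      using central_idempotent_idem[OF b] by (simp add: mult.assoc)
  qed
  have "e = e * e'" and "e' = e' * e"
    using absorb[OF e e' eq] absorb[OF e' e eq[symmetric]] by simp_all
  then show ?thesis
    using central_idempotent_commute[OF e central_idempotent_mem[OF e']] by simp
qed

lemma block_decomposable_if_block_sum_identity:
  assumes "block_sum R u"
  shows "block_decomposable R"
proof -
  obtain cs where "\<forall>c\<in>set cs. central_primitive_idempotent R c" and "sum_list cs = u"
    using assms unfolding block_sum_def by blast
  then have "\<forall>i<length cs. central_primitive_idempotent R (cs ! i)"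
    and "is_identity_of (\<Sum>i<length cs. cs ! i) R"
    using identity by (auto simp: sum_list_sum_nth atLeast0LessThan)
  then show ?thesis
    unfolding block_decomposable_def by blast
qed

lemma noetherian_block_decomposable:
  assumes "left_noetherian R \<or> right_noetherian R"
  shows "block_decomposable R"
proof (rule ccontr)
  assume "\<not> block_decomposable R"
  then have "\<not> block_sum R u"
    using block_decomposable_if_block_sum_identity by blast
  then obtain f where f: "\<And>n. central_idempotent R (f n)"
    and decr: "\<And>n. f n * f (Suc n) = f (Suc n)" and strict: "\<And>n. f (Suc n) \<noteq> f n"
    by (rule not_block_sum_descending_chain[OF central_idempotent_identity]) blast
  define J where "J n = (\<lambda>x. x * (u - f n)) ` R" for n
  have complement: "central_idempotent R (u - f n)" for n
    using f by (rule central_idempotent_complement)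
  have "(u - f n) * (u - f (Suc n)) = u - f n" for n
    using decr[of n] identity_mem central_idempotent_mem[OF f]
    by (simp add: algebra_simps)
  then have chain: "J n \<subseteq> J (Suc n)" for n
    unfolding J_def by (rule principal_ideal_mono[OF central_idempotent_mem[OF complement]])
  have "left_ideal_of R (J n)" "right_ideal_of R (J n)" for n
    unfolding J_def using complement by (rule principal_ideal_two_sided)+
  then have "\<exists>m. \<forall>n\<ge>m. J n = J m"
    using assms chain unfolding left_noetherian_def right_noetherian_def by blast
  then obtain m where "J (Suc m) = J m"
    by (metis le_SucI order_refl)
  then have "u - f (Suc m) = u - f m"
    unfolding J_def using complement by (blast intro: principal_ideal_inj)
  then show False
    using strict by simp
qed

end

section \<open>Epsilon-strong gradings\<close>

locale graded = group G for G :: "('g, 'm) monoid_scheme" (structure) +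
  fixes S :: "'g \<Rightarrow> 'a::ring set"
  assumes graded: "graded_ring G S"
begin

lemma grade_zero: "g \<in> carrier G \<Longrightarrow> 0 \<in> S g"
  and grade_add: "g \<in> carrier G \<Longrightarrow> x \<in> S g \<Longrightarrow> y \<in> S g \<Longrightarrow> x + y \<in> S g"
  and grade_uminus: "g \<in> carrier G \<Longrightarrow> x \<in> S g \<Longrightarrow> - x \<in> S g"
  and grade_mult: "g \<in> carrier G \<Longrightarrow> h \<in> carrier G \<Longrightarrow> x \<in> S g \<Longrightarrow> y \<in> S h \<Longrightarrow> x * y \<in> S (g \<otimes> h)"
  using graded[unfolded graded_ring_def, THEN conjunct2] by simp_all

lemma grade_decomposition:
  obtains F f where "finite F" "F \<subseteq> carrier G" "\<forall>g\<in>F. f g \<in> S g" "x = sum f F"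
  using graded[unfolded graded_ring_def, THEN conjunct2, THEN conjunct2, THEN conjunct2] by meson

lemma grade_independent:
  assumes "finite F" "F \<subseteq> carrier G" "\<forall>g\<in>F. f g \<in> S g" "sum f F = 0" "g \<in> F"
  shows "f g = 0"
  using graded[unfolded graded_ring_def, THEN conjunct2, THEN conjunct2, THEN conjunct2] assms
  by meson

end

locale epsilon_strongly_graded = graded +
  assumes epsilon_strong: "epsilon_strong G S"
begin

abbreviation I where
  "I g \<equiv> setmul (S g) (S (inv g))"

lemma setmul_I_grade: "g \<in> carrier G \<Longrightarrow> setmul (I g) (S g) = S g"
  using epsilon_strong unfolding epsilon_strong_def by blast

lemma eps_identity:
  assumes "g \<in> carrier G"
  shows "is_identity_of (eps G S g) (I g)"
proof -
  obtain u where "is_identity_of u (I g)"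
    using epsilon_strong assms unfolding epsilon_strong_def by blast
  then show ?thesis
    unfolding eps_def by (metis is_identity_of_unique theI)
qed

lemma eps_mem: "g \<in> carrier G \<Longrightarrow> eps G S g \<in> I g"
  using eps_identity unfolding is_identity_of_def by blast

lemma I_subset_grade_one: "g \<in> carrier G \<Longrightarrow> I g \<subseteq> S \<one>"
  by (rule setmul_subset) (use grade_mult[of g "inv g"] in \<open>auto intro: grade_zero grade_add\<close>)

lemma eps_mult_left:
  assumes "g \<in> carrier G" and "s \<in> S g"
  shows "eps G S g * s = s"
  using assms setmul_I_grade eps_identity unfolding is_identity_of_def
  by (metis setmul_left_identity)

lemma eps_mult_right:
  assumes g: "g \<in> carrier G" and "s \<in> S g"
  shows "s * eps G S (inv g) = s"
proof -
  have "s \<in> setmul (I g) (S g)"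
    using assms setmul_I_grade by blast
  then have "s \<in> setmul (S g) (I (inv g))"
    using setmul_assoc_subset g by auto
  then show ?thesis
    using eps_identity[of "inv g"] g unfolding is_identity_of_def
    by (metis inv_closed setmul_right_identity)
qed

lemma eps_central:
  assumes g: "g \<in> carrier G" and r: "r \<in> S \<one>"
  shows "eps G S g * r = r * eps G S g"
proof -
  let ?e = "eps G S g"
  have "?e * r \<in> I g"
    by (rule setmul_mult_right[OF eps_mem[OF g]]) (use grade_mult[of "inv g" \<one> _ r] g r in auto)
  moreover have "r * ?e \<in> I g"
    by (rule setmul_mult_left[OF eps_mem[OF g]]) (use grade_mult[of \<one> g r] g r in auto)
  ultimately have "?e * r = ?e * r * ?e" "r * ?e = ?e * (r * ?e)"
    using eps_identity[OF g] unfolding is_identity_of_def by metis+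
  then show ?thesis
    by (simp add: mult.assoc)
qed

lemma eps_central_idempotent:
  assumes g: "g \<in> carrier G"
  shows "central_idempotent (S \<one>) (eps G S g)"
proof -
  have "eps G S g * eps G S g = eps G S g"
    using eps_identity[OF g] eps_mem[OF g] unfolding is_identity_of_def by blast
  then show ?thesis
    unfolding central_idempotent_def using eps_mem[OF g] I_subset_grade_one[OF g] eps_central[OF g] by blast
qed

lemma eps_absorb_left:
  assumes g: "g \<in> carrier G" and "w \<in> S \<one>" and "eps G S g * w = eps G S g" and "s \<in> S g"
  shows "w * s = s"
proof -
  have "w * s = (w * eps G S g) * s"
    using eps_mult_left[OF g \<open>s \<in> S g\<close>] by (simp add: mult.assoc)
  also have "\<dots> = s"
    using assms eps_central eps_mult_left by simp
  finally show ?thesis .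
qed

lemma eps_absorb_right:
  assumes g: "g \<in> carrier G" and "eps G S (inv g) * w = eps G S (inv g)" and "s \<in> S g"
  shows "s * w = s"
  using assms eps_mult_right by (metis mult.assoc)

lemma unital_subring_grade_one: "unital_subring (S \<one>) (eps G S \<one>)"
proof
  show "is_identity_of (eps G S \<one>) (S \<one>)"
    unfolding is_identity_of_def
    using eps_mem[of \<one>] I_subset_grade_one[of \<one>] eps_mult_left[of \<one>] eps_mult_right[of \<one>] by auto
  show "x * y \<in> S \<one>" if "x \<in> S \<one>" "y \<in> S \<one>" for x y
    using grade_mult[of \<one> \<one> x y] that by simp
qed (auto intro: grade_zero grade_add grade_uminus)

lemma join_closure_eps_central_idempotent:
  "x \<in> join_closure (eps G S ` C) \<Longrightarrow> C \<subseteq> carrier G \<Longrightarrow> central_idempotent (S \<one>) x"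
  using unital_subring.join_closure_central_idempotent[OF unital_subring_grade_one]
    eps_central_idempotent by blast

lemma epsilon_finite_if_block_decomposable:
  assumes "block_decomposable (S \<one>)"
  shows "epsilon_finite G S"
proof -
  have "join_closure (eps G S ` carrier G) \<subseteq> {e. central_idempotent (S \<one>) e}"
    using join_closure_eps_central_idempotent by blast
  then show ?thesis
    using unital_subring.finite_central_idempotents[OF unital_subring_grade_one assms] epsilon_strong
    unfolding epsilon_finite_def by (blast intro: finite_subset)
qed

end

section \<open>Induced gradings\<close>

lemma induced_gradingI:
  "finite F \<Longrightarrow> F \<subseteq> C \<Longrightarrow> \<forall>g\<in>F. f g \<in> S g \<Longrightarrow> x = sum f F \<Longrightarrow> x \<in> induced_grading S C"
  unfolding induced_grading_def by blast

lemma induced_gradingE: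
  assumes "x \<in> induced_grading S C"
  obtains F f where "finite F" "F \<subseteq> C" "\<forall>g\<in>F. f g \<in> S g" "x = sum f F"
  using assms unfolding induced_grading_def by blast

lemma grade_subset_induced: "g \<in> C \<Longrightarrow> S g \<subseteq> induced_grading S C"
  by (auto intro: induced_gradingI[of "{g}" _ "\<lambda>_. _"])

lemma induced_zero: "0 \<in> induced_grading S C"
  by (rule induced_gradingI[of "{}"]) auto

lemma induced_grading_left_identity:
  assumes "x \<in> induced_grading S C" and "\<And>g s. g \<in> C \<Longrightarrow> s \<in> S g \<Longrightarrow> w * s = s"
  shows "w * x = x"
proof -
  obtain F f where "F \<subseteq> C" "\<forall>g\<in>F. f g \<in> S g" "x = sum f F"
    using assms(1) unfolding induced_grading_def by blast
  then show ?thesis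
    using assms(2) by (auto simp: sum_distrib_left intro!: sum.cong)
qed

lemma induced_grading_right_identity:
  assumes "x \<in> induced_grading S C" and "\<And>g s. g \<in> C \<Longrightarrow> s \<in> S g \<Longrightarrow> s * w = s"
  shows "x * w = x"
proof -
  obtain F f where "F \<subseteq> C" "\<forall>g\<in>F. f g \<in> S g" "x = sum f F"
    using assms(1) unfolding induced_grading_def by blast
  then show ?thesis
    using assms(2) by (auto simp: sum_distrib_right intro!: sum.cong)
qed

context graded
begin

abbreviation T where
  "T \<equiv> induced_grading S"

lemma induced_add:
  assumes C: "C \<subseteq> carrier G" and "x \<in> T C" and "y \<in> T C"
  shows "x + y \<in> T C"
proof -
  obtain F1 f1 where 1: "finite F1" "F1 \<subseteq> C" "\<forall>g\<in>F1. f1 g \<in> S g" "x = sum f1 F1"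
    using \<open>x \<in> T C\<close> by (rule induced_gradingE)
  obtain F2 f2 where 2: "finite F2" "F2 \<subseteq> C" "\<forall>g\<in>F2. f2 g \<in> S g" "y = sum f2 F2"
    using \<open>y \<in> T C\<close> by (rule induced_gradingE)
  define f where "f g = (if g \<in> F1 then f1 g else 0) + (if g \<in> F2 then f2 g else 0)" for g
  have "sum f (F1 \<union> F2) = sum f1 F1 + sum f2 F2"
    using 1(1) 2(1) unfolding f_def sum.distrib
    by (simp add: sum.inter_restrict[symmetric] Int_absorb1)
  moreover have "\<forall>g\<in>F1 \<union> F2. f g \<in> S g"
    using 1 2 C unfolding f_def by (auto intro!: grade_add grade_zero)
  ultimately show ?thesis
    using 1 2 by (intro induced_gradingI[of "F1 \<union> F2" _ f]) auto
qed

lemma induced_uminus: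
  assumes C: "C \<subseteq> carrier G" and "x \<in> T C"
  shows "- x \<in> T C"
proof -
  obtain F f where F: "finite F" "F \<subseteq> C" "\<forall>g\<in>F. f g \<in> S g" "x = sum f F"
    using \<open>x \<in> T C\<close> by (rule induced_gradingE)
  then show ?thesis
    using C by (intro induced_gradingI[of F _ "\<lambda>g. - f g"]) (auto simp: sum_negf grade_uminus)
qed

lemma induced_sum:
  assumes "C \<subseteq> carrier G" and "finite A" and "\<And>i. i \<in> A \<Longrightarrow> h i \<in> T C"
  shows "sum h A \<in> T C"
  using assms(2,3) by (induction A rule: finite_induct) (auto intro: induced_zero induced_add[OF assms(1)])

lemma induced_mult_grade_one:
  assumes C: "C \<subseteq> carrier G" and "x \<in> T C" and "r \<in> S \<one>"
  shows "x * r \<in> T C"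
proof -
  obtain F f where F: "finite F" "F \<subseteq> C" "\<forall>g\<in>F. f g \<in> S g" "x = sum f F"
    using \<open>x \<in> T C\<close> by (rule induced_gradingE)
  have "f g * r \<in> T C" if "g \<in> F" for g
    using grade_mult[of g \<one> "f g" r] grade_subset_induced[of g C S] that F C \<open>r \<in> S \<one>\<close> by auto
  then show ?thesis
    using F C by (simp add: sum_distrib_right induced_sum)
qed

end

locale coarsening = graded +
  fixes N
  assumes normal: "N \<lhd> G"
begin

lemma subgroup_N: "subgroup N G"
  using normal unfolding normal_def by blast

lemma group_Mod: "group (G Mod N)"
  using normal by (rule normal.factorgroup_is_group)

lemma coset_subset: "C \<in> carrier (G Mod N) \<Longrightarrow> C \<subseteq> carrier G"
  using subgroup.rcosets_carrier[OF subgroup_N is_group] by (simp add: FactGroup_def)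

lemma coset_eq: "C \<in> carrier (G Mod N) \<Longrightarrow> g \<in> C \<Longrightarrow> C = N #> g"
  using repr_independence[OF _ _ subgroup_N] by (auto simp: carrier_FactGroup)

lemma coset_mem: "g \<in> carrier G \<Longrightarrow> N #> g \<in> carrier (G Mod N)"
  by (simp add: carrier_FactGroup)

lemma coset_mult: "g \<in> C \<Longrightarrow> h \<in> D \<Longrightarrow> g \<otimes> h \<in> C <#> D"
  unfolding set_mult_def by blast

lemma coset_mult_closed:
  "C \<in> carrier (G Mod N) \<Longrightarrow> D \<in> carrier (G Mod N) \<Longrightarrow> C <#> D \<in> carrier (G Mod N)"
  using group.is_monoid[OF group_Mod] by (metis monoid.m_closed mult_FactGroup)

lemma coset_inv:
  assumes "C \<in> carrier (G Mod N)"
  shows "h \<in> inv\<^bsub>G Mod N\<^esub> C \<longleftrightarrow> h \<in> carrier G \<and> inv h \<in> C"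
  using normal.inv_FactGroup[OF normal assms] coset_subset[OF assms]
  by (auto simp: SET_INV_def intro!: bexI[of _ "inv h"])

lemma induced_mult:
  assumes C: "C \<in> carrier (G Mod N)" and D: "D \<in> carrier (G Mod N)"
    and "x \<in> T C" and "y \<in> T D"
  shows "x * y \<in> T (C <#> D)"
proof -
  obtain F1 f1 where 1: "finite F1" "F1 \<subseteq> C" "\<forall>g\<in>F1. f1 g \<in> S g" "x = sum f1 F1"
    using \<open>x \<in> T C\<close> by (rule induced_gradingE)
  obtain F2 f2 where 2: "finite F2" "F2 \<subseteq> D" "\<forall>g\<in>F2. f2 g \<in> S g" "y = sum f2 F2"
    using \<open>y \<in> T D\<close> by (rule induced_gradingE)
  have CD: "C <#> D \<subseteq> carrier G"
    using coset_mult_closed[OF C D] by (rule coset_subset)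
  have "f1 g * f2 h \<in> T (C <#> D)" if "g \<in> F1" "h \<in> F2" for g h
  proof -
    have "f1 g * f2 h \<in> S (g \<otimes> h)"
      using that 1 2 coset_subset[OF C] coset_subset[OF D] by (blast intro: grade_mult)
    moreover have "g \<otimes> h \<in> C <#> D"
      using coset_mult that 1(2) 2(2) by blast
    ultimately show ?thesis
      using grade_subset_induced[of "g \<otimes> h" "C <#> D" S] by blast
  qed
  then have "(\<Sum>g\<in>F1. \<Sum>h\<in>F2. f1 g * f2 h) \<in> T (C <#> D)"
    using CD 1(1) 2(1) by (intro induced_sum) auto
  then show ?thesis
    using 1(4) 2(4) by (simp add: sum_product)
qed

lemma induced_decomposition:
  obtains \<F> \<phi> where "finite \<F>" "\<F> \<subseteq> carrier (G Mod N)" "\<forall>C\<in>\<F>. \<phi> C \<in> T C" "x = sum \<phi> \<F>"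
proof -
  obtain F f where F: "finite F" "F \<subseteq> carrier G" "\<forall>g\<in>F. f g \<in> S g" "x = sum f F"
    by (rule grade_decomposition)
  let ?\<F> = "(\<lambda>g. N #> g) ` F"
  have "x = (\<Sum>C\<in>?\<F>. sum f {g \<in> F. N #> g = C})"
    using F(4) sum.image_gen[OF F(1), of f "\<lambda>g. N #> g"] by simp
  moreover have "sum f {g \<in> F. N #> g = C} \<in> T C" for C
  proof (rule induced_gradingI[of "{g \<in> F. N #> g = C}" C f])
    show "{g \<in> F. N #> g = C} \<subseteq> C"
      using F(2) rcos_self[OF _ subgroup_N] by blast
  qed (use F in auto)
  moreover have "?\<F> \<subseteq> carrier (G Mod N)"
    using F(2) coset_mem by blast
  ultimately show thesis
    using F(1) by (intro that[of ?\<F> "\<lambda>C. sum f {g \<in> F. N #> g = C}"]) auto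
qed

lemma induced_independent:
  assumes "finite \<F>" and \<F>: "\<F> \<subseteq> carrier (G Mod N)" and "\<forall>C\<in>\<F>. \<phi> C \<in> T C"
    and "sum \<phi> \<F> = 0" and "C \<in> \<F>"
  shows "\<phi> C = 0"
proof -
  have "\<forall>C\<in>\<F>. \<exists>K k. finite K \<and> K \<subseteq> C \<and> (\<forall>g\<in>K. k g \<in> S g) \<and> \<phi> C = sum k K"
    using assms(3) unfolding induced_grading_def by blast
  then obtain K k where K: "\<And>C. C \<in> \<F> \<Longrightarrow>
      finite (K C) \<and> K C \<subseteq> C \<and> (\<forall>g\<in>K C. k C g \<in> S g) \<and> \<phi> C = sum (k C) (K C)"
    by (metis bchoice)
  define \<psi> where "\<psi> g = k (N #> g) g" for g
  have coset_K: "N #> g = C" if "C \<in> \<F>" "g \<in> K C" for C g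
    using coset_eq[of C g] \<F> K that by blast
  have sum_K: "sum \<psi> (K C) = \<phi> C" if "C \<in> \<F>" for C
    using K[OF that] coset_K[OF that] unfolding \<psi>_def by simp
  have "\<forall>C\<in>\<F>. \<forall>D\<in>\<F>. C \<noteq> D \<longrightarrow> K C \<inter> K D = {}"
    using coset_K by blast
  then have "sum \<psi> (\<Union>C\<in>\<F>. K C) = (\<Sum>C\<in>\<F>. sum \<psi> (K C))"
    using \<open>finite \<F>\<close> K by (intro sum.UNION_disjoint) auto
  then have "sum \<psi> (\<Union>C\<in>\<F>. K C) = 0"
    using sum_K \<open>sum \<phi> \<F> = 0\<close> by simp
  moreover have "\<forall>g\<in>(\<Union>C\<in>\<F>. K C). \<psi> g \<in> S g"
    using K coset_K unfolding \<psi>_def by auto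
  moreover have "(\<Union>C\<in>\<F>. K C) \<subseteq> carrier G"
    using K \<F> coset_subset by blast
  ultimately have "\<psi> g = 0" if "g \<in> K C" for g
    using grade_independent[of "\<Union>C\<in>\<F>. K C" \<psi> g] \<open>finite \<F>\<close> K \<open>C \<in> \<F>\<close> that by blast
  then show ?thesis
    using sum_K[OF \<open>C \<in> \<F>\<close>] by simp
qed

lemma graded_ring_induced: "graded_ring (G Mod N) T"
  unfolding graded_ring_def
proof (intro conjI ballI allI impI group_Mod induced_zero)
  fix C x y assume "C \<in> carrier (G Mod N)" "x \<in> T C" "y \<in> T C"
  then show "x + y \<in> T C" "- x \<in> T C"
    using induced_add induced_uminus coset_subset by blast+
next
  fix C D x y assume "C \<in> carrier (G Mod N)" "D \<in> carrier (G Mod N)" "x \<in> T C" "y \<in> T D"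
  then show "x * y \<in> T (C \<otimes>\<^bsub>G Mod N\<^esub> D)"
    by (simp add: induced_mult)
next
  fix x
  show "\<exists>\<F> \<phi>. finite \<F> \<and> \<F> \<subseteq> carrier (G Mod N) \<and> (\<forall>C\<in>\<F>. \<phi> C \<in> T C) \<and> x = sum \<phi> \<F>"
    by (rule induced_decomposition) blast
next
  fix \<F> \<phi> C
  assume "finite \<F> \<and> \<F> \<subseteq> carrier (G Mod N) \<and> (\<forall>C\<in>\<F>. \<phi> C \<in> T C) \<and> sum \<phi> \<F> = 0" "C \<in> \<F>"
  then show "\<phi> C = 0"
    using induced_independent by blast
qed

lemma setmul_induced:
  assumes "C \<in> carrier (G Mod N)" and "D \<in> carrier (G Mod N)"
  shows "setmul (T C) (T D) \<subseteq> T (C <#> D)"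
proof (rule setmul_subset)
  show "x + y \<in> T (C <#> D)" if "x \<in> T (C <#> D)" "y \<in> T (C <#> D)" for x y
    using induced_add[OF coset_subset[OF coset_mult_closed[OF assms]]] that by blast
qed (auto intro: induced_zero induced_mult assms)

end

locale epsilon_strong_coarsening = epsilon_strongly_graded + coarsening
begin

lemma I_subset_induced:
  assumes C: "C \<in> carrier (G Mod N)" and "g \<in> C"
  shows "I g \<subseteq> setmul (T C) (T (inv\<^bsub>G Mod N\<^esub> C))"
proof -
  have "g \<in> carrier G"
    using assms coset_subset by blast
  then have "inv g \<in> inv\<^bsub>G Mod N\<^esub> C"
    using assms coset_inv by simp
  then show ?thesis
    using \<open>g \<in> C\<close> by (intro setmul_mono grade_subset_induced)
qed

lemma induced_triple_product:
  assumes C: "C \<in> carrier (G Mod N)"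
  shows "setmul (setmul (T C) (T (inv\<^bsub>G Mod N\<^esub> C))) (T C) = T C"
proof
  let ?C' = "inv\<^bsub>G Mod N\<^esub> C"
  have C': "?C' \<in> carrier (G Mod N)"
    using group.inv_closed[OF group_Mod C] .
  have "setmul (setmul (T C) (T ?C')) (T C) \<subseteq> setmul (T (C <#> ?C')) (T C)"
    using setmul_induced[OF C C'] by (rule setmul_mono) simp
  also have "\<dots> \<subseteq> T ((C <#> ?C') <#> C)"
    using coset_mult_closed[OF C C'] C by (rule setmul_induced)
  also have "(C <#> ?C') <#> C = C"
    using group.r_inv[OF group_Mod C] monoid.l_one[OF group.is_monoid[OF group_Mod] C] by simp
  finally show "setmul (setmul (T C) (T ?C')) (T C) \<subseteq> T C" .
next
  let ?C' = "inv\<^bsub>G Mod N\<^esub> C"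
  have "setmul (I g) (S g) \<subseteq> setmul (setmul (T C) (T ?C')) (T C)" if "g \<in> C" for g
    using I_subset_induced[OF C that] grade_subset_induced[OF that] by (rule setmul_mono)
  then have "S g \<subseteq> setmul (setmul (T C) (T ?C')) (T C)" if "g \<in> C" for g
    using setmul_I_grade that coset_subset[OF C] by blast
  then show "T C \<subseteq> setmul (setmul (T C) (T ?C')) (T C)"
    by (auto elim!: induced_gradingE intro!: setmul_sum)
qed

lemma join_closure_eps_subset:
  assumes C: "C \<in> carrier (G Mod N)"
  shows "join_closure (eps G S ` C) \<subseteq> setmul (T C) (T (inv\<^bsub>G Mod N\<^esub> C))"
proof
  let ?M = "setmul (T C) (T (inv\<^bsub>G Mod N\<^esub> C))"
  have C_G: "C \<subseteq> carrier G" and C'_G: "inv\<^bsub>G Mod N\<^esub> C \<subseteq> carrier G"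
    using C group.inv_closed[OF group_Mod C] by (simp_all add: coset_subset)
  show "x \<in> ?M" if "x \<in> join_closure (eps G S ` C)" for x
    using that
  proof induction
    case (base x)
    then show ?case
      using eps_mem I_subset_induced[OF C] C_G by blast
  next
    case (join a b)
    have "b \<in> S \<one>"
      using join_closure_eps_central_idempotent[OF join.hyps(2) C_G] by (rule central_idempotent_mem)
    then have "a * b \<in> ?M"
      using join.IH(1) by (auto intro: setmul_mult_right induced_mult_grade_one[OF C'_G])
    then have "- (a * b) \<in> ?M"
      by (rule setmul_uminus) (rule induced_uminus[OF C_G])
    then show ?case
      using join.IH setmul_add by (metis diff_conv_add_uminus)
  qed
qed

lemma induced_identity:
  assumes fin: "finite (join_closure (eps G S ` carrier G))" and C: "C \<in> carrier (G Mod N)"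
  shows "\<exists>w. is_identity_of w (setmul (T C) (T (inv\<^bsub>G Mod N\<^esub> C)))"
proof -
  let ?C' = "inv\<^bsub>G Mod N\<^esub> C"
  let ?M = "setmul (T C) (T ?C')"
  let ?E = "eps G S ` C"
  have C_G: "C \<subseteq> carrier G"
    using C by (rule coset_subset)
  have "?E \<subseteq> join_closure (eps G S ` carrier G)"
    using C_G by (auto intro: join_closure.base)
  then have "finite ?E"
    using fin by (rule finite_subset)
  moreover have "?E \<noteq> {}"
    using subgroup.rcosets_non_empty[OF subgroup_N] C by (simp add: FactGroup_def)
  ultimately obtain w where w: "w \<in> join_closure ?E" and upper: "\<forall>v\<in>?E. v * w = v"
    using unital_subring.join_closure_upper_bound[OF unital_subring_grade_one] eps_central_idempotent C_G
    by blast
  have w_S: "w \<in> S \<one>"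
    using join_closure_eps_central_idempotent[OF w C_G] by (rule central_idempotent_mem)
  have "is_identity_of w ?M"
  proof (rule is_identity_of_setmul)
    show "w \<in> ?M"
      using join_closure_eps_subset[OF C] w by blast
    show "w * x = x" if "x \<in> T C" for x
      using that
    proof (rule induced_grading_left_identity)
      show "w * s = s" if "g \<in> C" "s \<in> S g" for g s
        using eps_absorb_left[of g w s] upper that C_G w_S by blast
    qed
    show "x * w = x" if "x \<in> T ?C'" for x
      using that
    proof (rule induced_grading_right_identity)
      show "s * w = s" if "h \<in> ?C'" "s \<in> S h" for h s
        using eps_absorb_right[of h w s] upper that coset_inv[OF C] by blast
    qed
  qed
  then show ?thesis
    by blast
qed

lemma epsilon_strong_induced:
  assumes "epsilon_finite G S"
  shows "epsilon_strong (G Mod N) T"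
  unfolding epsilon_strong_def
  using graded_ring_induced induced_triple_product induced_identity assms
  unfolding epsilon_finite_def by blast

end

theorem theorem6p5:
  fixes G :: "('g, 'm) monoid_scheme" and S :: "'g \<Rightarrow> 'a::ring set"
  assumes "group G"
    and "epsilon_strong G S"
  shows "(block_decomposable (S \<one>\<^bsub>G\<^esub>) \<longrightarrow> epsilon_finite G S)
    \<and> (left_noetherian (S \<one>\<^bsub>G\<^esub>) \<or> right_noetherian (S \<one>\<^bsub>G\<^esub>)
        \<longrightarrow> epsilon_finite G S
          \<and> (\<forall>N. N \<lhd> G \<longrightarrow> epsilon_strong (G Mod N) (induced_grading S)))"
proof -
  interpret epsilon_strongly_graded G S
    using assms
    by (simp add: epsilon_strongly_graded_def epsilon_strongly_graded_axioms_def graded_def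
        graded_axioms_def epsilon_strong_def)
  have noetherian: "epsilon_finite G S"
    if "left_noetherian (S \<one>\<^bsub>G\<^esub>) \<or> right_noetherian (S \<one>\<^bsub>G\<^esub>)"
    using unital_subring.noetherian_block_decomposable[OF unital_subring_grade_one that]
    by (rule epsilon_finite_if_block_decomposable)
  show ?thesis
  proof (intro conjI impI allI)
    fix N assume "N \<lhd> G" and "left_noetherian (S \<one>\<^bsub>G\<^esub>) \<or> right_noetherian (S \<one>\<^bsub>G\<^esub>)"
    then interpret epsilon_strong_coarsening G S N
      by (simp add: epsilon_strong_coarsening_def coarsening_def coarsening_axioms_def
          graded_axioms epsilon_strongly_graded_axioms)
    show "epsilon_strong (G Mod N) (induced_grading S)"
      using epsilon_strong_induced noetherian \<open>left_noetherian (S \<one>\<^bsub>G\<^esub>) \<or> _\<close> by blast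
  qed (use epsilon_finite_if_block_decomposable noetherian in blast)+
qed

end
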